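(* Let $p_0=1$, $p_1=1$, $p_2=2$ and $p_n=2p_{n-1}+p_{n-2}$ for $n\ge 3$. Then $|S_n(123,2143,3214)|=p_n$ for all $n\ge0$; equivalently $$\sum_{n\ge0}|S_n(123,2143,3214)|\,x^n=\frac{1-x-x^2}{1-2x-x^2}.$$ *)

theory Defs
  imports Main "HOL-Combinatorics.Multiset_Permutations"
begin

definition contains_pattern :: "nat list \<Rightarrow> nat list \<Rightarrow> bool" where
  "contains_pattern w s \<longleftrightarrow>
     (\<exists>idx :: nat \<Rightarrow> nat.
        strict_mono_on {..<length s} idx \<and>
        (\<forall>j<length s. idx j < length w) \<and>
        (\<forall>a<length s. \<forall>b<length s. (s ! a < s ! b \<longleftrightarrow> w ! (idx a) < w ! (idx b))))"

definition avoiders :: "nat \<Rightarrow> nat list set \<Rightarrow> nat list set" where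
  "avoiders n P = {w \<in> permutations_of_set {1..n}. \<forall>s\<in>P. \<not> contains_pattern w s}"

fun pseq :: "nat \<Rightarrow> nat" where
  "pseq 0 = 1"
| "pseq (Suc 0) = 1"
| "pseq (Suc (Suc 0)) = 2"
| "pseq (Suc (Suc (Suc n))) = 2 * pseq (Suc (Suc n)) + pseq (Suc n)"

end

theory Submission
  imports Defs "HOL-Library.Sublist"
begin

text \<open>
  Let w avoid 123, 2143 and 3214 and let N be its largest entry. Two entries before N
  would have to form a descent y < x (else x y N is a 123); an entry z between that
  descent and N would give the 123 y z N or the 3214 x y z N; and if N stands third, every
  later entry is below x (else x y N t is a 2143), so x is the second largest entry. Hence
  w is N v, a N v or (N-1) b N v. Conversely, a new maximum can be inserted at either of
  the first two positions without creating an occurrence, because the maximum of none of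
  the three patterns sits among its first two entries; and N-1 b N v is as safe as b v,
  since an occurrence of 123 or 2143 starting with N-1 would need two larger entries,
  while 3214 has its maximum last. Deleting N, respectively N-1 and N, is thus a bijection
  from S_N(123,2143,3214) onto two copies of S_(N-1) and one of S_(N-2), whence
  p_N = 2 p_(N-1) + p_(N-2).
\<close>

lemma subseq_Cons_right_iff:
  "subseq xs (y # ys) \<longleftrightarrow> subseq xs ys \<or> (\<exists>xs'. xs = y # xs' \<and> subseq xs' ys)"
  by (cases xs) (auto dest: subseq_Cons')

lemma set_mono_subseq: "subseq xs ys \<Longrightarrow> set xs \<subseteq> set ys"
  by (induction rule: list_emb.induct) auto

lemma subseq_iff_strict_mono_indices:
  "subseq u w \<longleftrightarrow>
     (\<exists>idx. strict_mono_on {..<length u} idx \<and>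
            (\<forall>j<length u. idx j < length w \<and> u ! j = w ! idx j))"
  (is "_ \<longleftrightarrow> (\<exists>idx. ?indices u w idx)")
proof
  assume "subseq u w"
  then show "\<exists>idx. ?indices u w idx"
  proof induction
    case (list_emb_Nil ys)
    show ?case by (auto intro: strict_mono_onI)
  next
    case (list_emb_Cons xs ys y)
    then obtain idx where "?indices xs ys idx" by blast
    then show ?case
      by (intro exI[of _ "Suc \<circ> idx"]) (auto simp: strict_mono_on_def)
  next
    case (list_emb_Cons2 x y xs ys)
    then obtain idx where "?indices xs ys idx" by blast
    with \<open>x = y\<close> show ?case
      by (intro exI[of _ "\<lambda>j. case j of 0 \<Rightarrow> 0 | Suc j \<Rightarrow> Suc (idx j)"])
        (auto simp: strict_mono_on_def nth_Cons split: nat.split)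
  qed
next
  assume "\<exists>idx. ?indices u w idx"
  then obtain idx where mono: "strict_mono_on {..<length u} idx"
    and idx: "\<forall>j<length u. idx j < length w \<and> u ! j = w ! idx j" by blast
  have "subseq (map idx [0..<length u]) [0..<length w]"
    using mono idx by (intro sorted_subset_imp_subseq)
      (auto simp: sorted_wrt_iff_nth_less strict_mono_on_def)
  then have "subseq (map ((!) w) (map idx [0..<length u])) (map ((!) w) [0..<length w])"
    by (rule subseq_map)
  moreover have "map ((!) w) (map idx [0..<length u]) = u"
    using idx by (intro nth_equalityI) auto
  ultimately show "subseq u w" by (simp add: map_nth)
qed

lemma contains_pattern_iff_subseq:
  "contains_pattern w s \<longleftrightarrow>
     (\<exists>u. subseq u w \<and> length u = length s \<and>
          (\<forall>a<length s. \<forall>b<length s. s ! a < s ! b \<longleftrightarrow> u ! a < u ! b))"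
  (is "_ \<longleftrightarrow> (\<exists>u. ?occurrence u)")
proof
  assume "contains_pattern w s"
  then obtain idx where mono: "strict_mono_on {..<length s} idx"
    and bound: "\<forall>j<length s. idx j < length w"
    and iso: "\<forall>a<length s. \<forall>b<length s. s ! a < s ! b \<longleftrightarrow> w ! idx a < w ! idx b"
    unfolding contains_pattern_def by blast
  define u where "u = map (\<lambda>j. w ! idx j) [0..<length s]"
  have "subseq u w"
    unfolding subseq_iff_strict_mono_indices using mono bound by (auto simp: u_def)
  with iso have "?occurrence u" by (simp add: u_def)
  then show "\<exists>u. ?occurrence u" ..
next
  assume "\<exists>u. ?occurrence u"
  then show "contains_pattern w s"
    unfolding contains_pattern_def subseq_iff_strict_mono_indices by metis
qed

lemma contains_pattern_subseq_mono:
  "subseq v w \<Longrightarrow> contains_pattern v s \<Longrightarrow> contains_pattern w s"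
  unfolding contains_pattern_iff_subseq by (blast intro: subseq_order.order_trans)

lemma contains_pattern_length_le: "contains_pattern w s \<Longrightarrow> length s \<le> length w"
  unfolding contains_pattern_iff_subseq by (metis list_emb_length)

lemma contains_123_iff:
  "contains_pattern w [1,2,3] \<longleftrightarrow> (\<exists>a b c. subseq [a,b,c] w \<and> a < b \<and> b < c)"
  by (auto simp: contains_pattern_iff_subseq length_Suc_conv numeral_eq_Suc All_less_Suc2) blast

lemma contains_2143_iff:
  "contains_pattern w [2,1,4,3] \<longleftrightarrow> (\<exists>a b c d. subseq [a,b,c,d] w \<and> b < a \<and> a < d \<and> d < c)"
  by (auto simp: contains_pattern_iff_subseq length_Suc_conv numeral_eq_Suc All_less_Suc2) blast

lemma contains_3214_iff:
  "contains_pattern w [3,2,1,4] \<longleftrightarrow> (\<exists>a b c d. subseq [a,b,c,d] w \<and> c < b \<and> b < a \<and> a < d)"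
  by (auto simp: contains_pattern_iff_subseq length_Suc_conv numeral_eq_Suc All_less_Suc2) blast

text \<open>In an occurrence of s, the new maximum N could only stand for the largest entry of s,
  but N sits at a position at most k, before every largest entry of s.\<close>

lemma contains_pattern_insert_greater:
  assumes greater: "\<forall>z\<in>set (xs @ ys). z < N"
    and pos: "length xs \<le> k"
    and not_max: "\<forall>z\<in>set (take (Suc k) s). \<exists>y\<in>set s. z < y"
  shows "contains_pattern (xs @ N # ys) s \<longleftrightarrow> contains_pattern (xs @ ys) s"
proof
  assume "contains_pattern (xs @ N # ys) s"
  then obtain u where sub: "subseq u (xs @ N # ys)" and len: "length u = length s"
    and iso: "\<forall>a<length s. \<forall>b<length s. s ! a < s ! b \<longleftrightarrow> u ! a < u ! b"
    unfolding contains_pattern_iff_subseq by (elim exE conjE) (rule that)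
  from sub obtain u1 u2 where u: "u = u1 @ u2" and u1: "subseq u1 xs" and u2: "subseq u2 (N # ys)"
    by (rule subseq_appendE)
  have "subseq u2 ys"
  proof (rule ccontr)
    assume "\<not> subseq u2 ys"
    with u2 obtain u2' where "u2 = N # u2'"
      by (auto simp: subseq_Cons_right_iff)
    define j where "j = length u1"
    have j: "j \<le> k" "j < length s" "u ! j = N"
      using list_emb_length[OF u1] len pos by (auto simp: j_def u \<open>u2 = N # u2'\<close>)
    then have "s ! j \<in> set (take (Suc k) s)"
      by (auto simp: in_set_conv_nth intro: exI[of _ j])
    with not_max obtain y where "y \<in> set s" "s ! j < y" by blast
    then obtain i where i: "i < length s" "s ! j < s ! i" by (auto simp: in_set_conv_nth)
    then have "N < u ! i" using iso j by auto
    moreover have "u ! i \<in> set (xs @ N # ys)"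
      using i len set_mono_subseq[OF sub] by (metis nth_mem subsetD)
    ultimately have "u ! i \<in> set (xs @ ys)" by auto
    with greater \<open>N < u ! i\<close> show False by (auto dest: bspec)
  qed
  with u u1 have "subseq u (xs @ ys)" by (simp add: list_emb_append_mono)
  with len iso show "contains_pattern (xs @ ys) s"
    unfolding contains_pattern_iff_subseq by (auto intro!: exI[of _ u])
next
  assume "contains_pattern (xs @ ys) s"
  moreover have "subseq (xs @ ys) (xs @ N # ys)"
    by (simp add: subseq_append' list_emb_Cons)
  ultimately show "contains_pattern (xs @ N # ys) s"
    by (rule contains_pattern_subseq_mono[rotated])
qed

text \<open>An occurrence of s starting with x would need two entries of w above x.\<close>

lemma contains_pattern_Cons_second_largest:
  assumes below: "\<forall>z\<in>set w. z \<noteq> N \<longrightarrow> z < x"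
    and two_above: "\<exists>y\<in>set s. \<exists>z\<in>set s. hd s < y \<and> y < z"
  shows "contains_pattern (x # w) s \<longleftrightarrow> contains_pattern w s"
proof
  assume "contains_pattern (x # w) s"
  then obtain u where sub: "subseq u (x # w)" and len: "length u = length s"
    and iso: "\<forall>a<length s. \<forall>b<length s. s ! a < s ! b \<longleftrightarrow> u ! a < u ! b"
    unfolding contains_pattern_iff_subseq by (elim exE conjE) (rule that)
  have "subseq u w"
  proof (rule ccontr)
    assume "\<not> subseq u w"
    with sub obtain u' where u: "u = x # u'" and u': "subseq u' w"
      by (auto simp: subseq_Cons_right_iff)
    from two_above obtain y z where "y \<in> set s" "z \<in> set s" "hd s < y" "y < z" by blast
    moreover from \<open>y \<in> set s\<close> have "hd s = s ! 0" by (cases s) auto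
    ultimately obtain i j where ij: "i < length s" "j < length s" "s ! 0 < s ! i" "s ! i < s ! j"
      by (auto simp: in_set_conv_nth)
    then have "u ! 0 < u ! i" "u ! i < u ! j"
      using iso[rule_format, of 0 i] iso[rule_format, of i j] by force+
    then have "x < u ! i" "x < u ! j" "u ! i < u ! j"
      using u by auto
    have "i \<noteq> 0" "j \<noteq> 0" using ij by (metis less_irrefl less_trans)+
    with ij len u have "u ! i \<in> set u'" "u ! j \<in> set u'"
      by (auto simp: nth_Cons split: nat.splits)
    with set_mono_subseq[OF u'] have "u ! i \<in> set w" "u ! j \<in> set w" by auto
    with below \<open>x < u ! i\<close> \<open>x < u ! j\<close> have "u ! i = N" "u ! j = N"
      using not_less_iff_gr_or_eq by blast+
    with \<open>u ! i < u ! j\<close> show False by simp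
  qed
  with len iso show "contains_pattern w s"
    unfolding contains_pattern_iff_subseq by (auto intro!: exI[of _ u])
next
  assume "contains_pattern w s"
  then show "contains_pattern (x # w) s"
    by (rule contains_pattern_subseq_mono[rotated]) auto
qed

definition avoids :: "nat list \<Rightarrow> nat list set \<Rightarrow> bool" where
  "avoids w P \<longleftrightarrow> (\<forall>s\<in>P. \<not> contains_pattern w s)"

abbreviation forbidden :: "nat list set" where
  "forbidden \<equiv> {[1,2,3], [2,1,4,3], [3,2,1,4]}"

lemma avoids_insert_greater:
  assumes "\<forall>z\<in>set (xs @ ys). z < N" and "length xs \<le> 1"
  shows "avoids (xs @ N # ys) forbidden \<longleftrightarrow> avoids (xs @ ys) forbidden"
  using contains_pattern_insert_greater[OF assms] unfolding avoids_def by simp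

lemma avoids_insert_two_greater:
  assumes below: "\<forall>z\<in>set (b # v). z < x" and "x < N"
  shows "avoids (x # b # N # v) forbidden \<longleftrightarrow> avoids (b # v) forbidden"
proof -
  have greater: "\<forall>z\<in>set ([b] @ v). z < N" "\<forall>z\<in>set ([x, b] @ v). z < N"
    using assms by auto
  have "contains_pattern (x # b # N # v) s \<longleftrightarrow> contains_pattern (b # v) s"
    if "s \<in> {[1,2,3], [2,1,4,3]}" for s
  proof -
    have "contains_pattern (x # b # N # v) s \<longleftrightarrow> contains_pattern (b # N # v) s"
      using below that by (intro contains_pattern_Cons_second_largest) auto
    also have "\<dots> \<longleftrightarrow> contains_pattern (b # v) s"
      using contains_pattern_insert_greater[OF greater(1), of 1 s] that by auto
    finally show ?thesis .
  qed
  moreover have "contains_pattern (x # b # N # v) [3,2,1,4] \<longleftrightarrow> contains_pattern (b # v) [3,2,1,4]"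
  proof -
    have "contains_pattern (x # b # N # v) [3,2,1,4] \<longleftrightarrow> contains_pattern (x # b # v) [3,2,1,4]"
      using contains_pattern_insert_greater[OF greater(2), of 2] by simp
    also have "\<dots> \<longleftrightarrow> contains_pattern (b # v) [3,2,1,4]"
      using contains_pattern_insert_greater[of "[]" "b # v" x 0] below by simp
    finally show ?thesis .
  qed
  ultimately show ?thesis
    unfolding avoids_def by simp
qed

lemma avoids_forbidden_max_position:
  assumes w_avoids: "avoids w forbidden" and dist: "distinct w"
    and max: "N \<in> set w" "\<forall>z\<in>set w. z \<le> N"
  obtains (first) v where "w = N # v"
  | (second) a v where "w = a # N # v"
  | (third) a b v where "w = a # b # N # v" "\<forall>z\<in>set (b # v). z < a"
proof -
  have no_123: "\<not> (\<exists>a b c. subseq [a,b,c] w \<and> a < b \<and> b < c)"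
    and no_2143: "\<not> (\<exists>a b c d. subseq [a,b,c,d] w \<and> b < a \<and> a < d \<and> d < c)"
    and no_3214: "\<not> (\<exists>a b c d. subseq [a,b,c,d] w \<and> c < b \<and> b < a \<and> a < d)"
    using w_avoids unfolding avoids_def contains_123_iff[symmetric] contains_2143_iff[symmetric]
      contains_3214_iff[symmetric] by auto
  obtain x w1 where w: "w = x # w1" using max by (cases w) auto
  show thesis
  proof (cases "x = N")
    case True
    with w show thesis by (intro first) simp
  next
    case x_ne: False
    then obtain y w2 where w1: "w1 = y # w2" using max w by (cases w1) auto
    show thesis
    proof (cases "y = N")
      case True
      with w w1 show thesis by (intro second) simp
    next
      case y_ne: False
      have N_w2: "N \<in> set w2" and x_lt: "x < N" and y_lt: "y < N"
        using max x_ne y_ne by (auto simp: w w1 order.order_iff_strict)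
      have "y < x"
      proof (rule ccontr)
        assume "\<not> y < x"
        with dist have "x < y" by (auto simp: w w1)
        moreover from N_w2 have "subseq [x, y, N] w"
          by (simp add: w w1 subseq_singleton_left)
        ultimately show False using y_lt no_123 by blast
      qed
      obtain z w3 where w2: "w2 = z # w3" using N_w2 by (cases w2) auto
      have z_eq: "z = N"
      proof (rule ccontr)
        assume "z \<noteq> N"
        then have N_w3: "N \<in> set w3" and "z < N"
          using N_w2 max by (auto simp: w w1 w2 order.order_iff_strict)
        from dist have "y \<noteq> z" by (simp add: w w1 w2)
        then consider "y < z" | "z < y" by linarith
        then show False
        proof cases
          case 1
          from \<open>y < x\<close> N_w3 have "subseq [y, z, N] w"
            by (simp add: w w1 w2 subseq_singleton_left)
          with \<open>y < z\<close> \<open>z < N\<close> no_123 show False by blast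
        next
          case 2
          from N_w3 have "subseq [x, y, z, N] w"
            by (simp add: w w1 w2 subseq_singleton_left)
          with \<open>z < y\<close> \<open>y < x\<close> x_lt no_3214 show False by blast
        qed
      qed
      have "t < x" if "t \<in> set w3" for t
      proof (rule ccontr)
        assume "\<not> t < x"
        moreover from that dist have "t \<noteq> x" "t \<noteq> N"
          by (auto simp: w w1 w2 z_eq)
        moreover from that max have "t \<le> N" by (simp add: w w1 w2)
        ultimately have "x < t" "t < N" by auto
        moreover from that have "subseq [x, y, N, t] w"
          by (simp add: w w1 w2 z_eq subseq_singleton_left)
        ultimately show False using \<open>y < x\<close> no_2143 by blast
      qed
      with \<open>y < x\<close> show thesis
        by (intro third[of x y w3]) (auto simp: w w1 w2 z_eq)
    qed
  qed
qed

lemma append_Cons_permutations_of_set_iff: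
  assumes "x \<notin> A"
  shows "xs @ x # ys \<in> permutations_of_set (insert x A) \<longleftrightarrow> xs @ ys \<in> permutations_of_set A"
  using assms unfolding permutations_of_set_def by (auto simp: insert_ident)

lemma avoiders_eq: "avoiders n P = {w \<in> permutations_of_set {1..n}. avoids w P}"
  unfolding avoiders_def avoids_def ..

lemma avoiders_insert_max_iff:
  assumes "length xs \<le> 1"
  shows "xs @ Suc n # ys \<in> avoiders (Suc n) forbidden \<longleftrightarrow> xs @ ys \<in> avoiders n forbidden"
proof -
  have perm: "xs @ Suc n # ys \<in> permutations_of_set {1..Suc n} \<longleftrightarrow>
      xs @ ys \<in> permutations_of_set {1..n}"
    using append_Cons_permutations_of_set_iff[of "Suc n" "{1..n}"] by (simp add: atLeastAtMostSuc_conv)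
  have "avoids (xs @ Suc n # ys) forbidden \<longleftrightarrow> avoids (xs @ ys) forbidden"
    if "xs @ ys \<in> permutations_of_set {1..n}"
    using that assms by (intro avoids_insert_greater) (auto simp: permutations_of_set_def)
  with perm show ?thesis
    unfolding avoiders_eq by blast
qed

lemma avoiders_insert_two_max_iff:
  "Suc n # b # Suc (Suc n) # v \<in> avoiders (Suc (Suc n)) forbidden \<longleftrightarrow> b # v \<in> avoiders n forbidden"
proof -
  have "Suc n # b # Suc (Suc n) # v \<in> permutations_of_set {1..Suc (Suc n)} \<longleftrightarrow>
      Suc n # b # v \<in> permutations_of_set {1..Suc n}"
    using append_Cons_permutations_of_set_iff[of "Suc (Suc n)" "{1..Suc n}" "[Suc n, b]"]
    by (simp add: atLeastAtMostSuc_conv)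
  also have "\<dots> \<longleftrightarrow> b # v \<in> permutations_of_set {1..n}"
    using append_Cons_permutations_of_set_iff[of "Suc n" "{1..n}" "[]"]
    by (simp add: atLeastAtMostSuc_conv)
  finally have perm: "Suc n # b # Suc (Suc n) # v \<in> permutations_of_set {1..Suc (Suc n)} \<longleftrightarrow>
      b # v \<in> permutations_of_set {1..n}" .
  have "avoids (Suc n # b # Suc (Suc n) # v) forbidden \<longleftrightarrow> avoids (b # v) forbidden"
    if "b # v \<in> permutations_of_set {1..n}"
    using that by (intro avoids_insert_two_greater) (auto simp: permutations_of_set_def)
  with perm show ?thesis
    unfolding avoiders_eq by blast
qed

lemma avoiders_Suc_nonempty: "v \<in> avoiders (Suc n) P \<Longrightarrow> v \<noteq> []"
  unfolding avoiders_def permutations_of_set_def by auto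

lemma avoiders_Suc_Suc_Suc_eq:
  fixes n :: nat
  defines "N \<equiv> Suc (Suc (Suc n))"
  shows "avoiders N forbidden =
      (\<lambda>v. N # v) ` avoiders (Suc (Suc n)) forbidden \<union>
      (\<lambda>v. hd v # N # tl v) ` avoiders (Suc (Suc n)) forbidden \<union>
      (\<lambda>v. Suc (Suc n) # hd v # N # tl v) ` avoiders (Suc n) forbidden"
    (is "_ = ?X \<union> ?Y \<union> ?Z")
proof
  show "avoiders N forbidden \<subseteq> ?X \<union> ?Y \<union> ?Z"
  proof
    fix w assume w: "w \<in> avoiders N forbidden"
    then have set_w: "set w = {1..N}" and "distinct w" "avoids w forbidden"
      by (auto simp: avoiders_eq permutations_of_set_def)
    from set_w have "N \<in> set w" "\<forall>z\<in>set w. z \<le> N" by (auto simp: N_def)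
    with \<open>avoids w forbidden\<close> \<open>distinct w\<close> show "w \<in> ?X \<union> ?Y \<union> ?Z"
    proof (cases rule: avoids_forbidden_max_position)
      case (first v)
      with w have "v \<in> avoiders (Suc (Suc n)) forbidden"
        using avoiders_insert_max_iff[of "[]" "Suc (Suc n)" v] by (simp add: N_def)
      with first show ?thesis by blast
    next
      case (second a v)
      with w have "a # v \<in> avoiders (Suc (Suc n)) forbidden"
        using avoiders_insert_max_iff[of "[a]" "Suc (Suc n)" v] by (simp add: N_def)
      with second show ?thesis
        by (intro UnI1 UnI2 image_eqI[of _ _ "a # v"]) simp_all
    next
      case (third a b v)
      have "a \<in> {1..N}" "a \<noteq> N"
        using third \<open>distinct w\<close> set_w by auto
      then have "a \<le> Suc (Suc n)" by (auto simp: N_def)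
      moreover have "Suc (Suc n) \<in> set w"
        using set_w by (simp add: N_def)
      ultimately have "a = Suc (Suc n)"
        using third by (auto simp: N_def)
      with third w have "b # v \<in> avoiders (Suc n) forbidden"
        using avoiders_insert_two_max_iff[of "Suc n" b v] by (simp add: N_def)
      with third \<open>a = Suc (Suc n)\<close> show ?thesis
        by (intro UnI2 image_eqI[of _ _ "b # v"]) simp_all
    qed
  qed
next
  show "?X \<union> ?Y \<union> ?Z \<subseteq> avoiders N forbidden"
  proof (intro Un_least image_subsetI)
    fix v assume "v \<in> avoiders (Suc (Suc n)) forbidden"
    then show "N # v \<in> avoiders N forbidden"
      using avoiders_insert_max_iff[of "[]" "Suc (Suc n)" v] by (simp add: N_def)
  next
    fix v assume "v \<in> avoiders (Suc (Suc n)) forbidden"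
    then have "[hd v] @ tl v \<in> avoiders (Suc (Suc n)) forbidden"
      using avoiders_Suc_nonempty by simp
    then show "hd v # N # tl v \<in> avoiders N forbidden"
      using avoiders_insert_max_iff[of "[hd v]" "Suc (Suc n)" "tl v"] by (simp add: N_def)
  next
    fix v assume "v \<in> avoiders (Suc n) forbidden"
    then have "hd v # tl v \<in> avoiders (Suc n) forbidden"
      using avoiders_Suc_nonempty by simp
    then show "Suc (Suc n) # hd v # N # tl v \<in> avoiders N forbidden"
      using avoiders_insert_two_max_iff[of "Suc n" "hd v" "tl v"] by (simp add: N_def)
  qed
qed

lemma card_avoiders_Suc_Suc_Suc:
  "card (avoiders (Suc (Suc (Suc n))) forbidden) =
     2 * card (avoiders (Suc (Suc n)) forbidden) + card (avoiders (Suc n) forbidden)"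
proof -
  define N where "N = Suc (Suc (Suc n))"
  let ?X = "(\<lambda>v. N # v) ` avoiders (Suc (Suc n)) forbidden"
  let ?Y = "(\<lambda>v. hd v # N # tl v) ` avoiders (Suc (Suc n)) forbidden"
  let ?Z = "(\<lambda>v. Suc (Suc n) # hd v # N # tl v) ` avoiders (Suc n) forbidden"
  have hd_le: "hd v \<le> Suc k" if "v \<in> avoiders (Suc k) P" for v k P
    using that avoiders_Suc_nonempty[OF that] hd_in_set[of v]
    by (auto simp: avoiders_def permutations_of_set_def)
  have inj_hd_tl: "inj_on (\<lambda>v. c # hd v # N # tl v) (avoiders (Suc k) P)"
    "inj_on (\<lambda>v. hd v # N # tl v) (avoiders (Suc k) P)" for c k P
    by (auto intro!: inj_onI dest!: avoiders_Suc_nonempty simp: list.expand)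
  have "?X \<inter> ?Y = {}" "(?X \<union> ?Y) \<inter> ?Z = {}"
    using hd_le by (fastforce simp: N_def)+
  moreover have "finite (avoiders k P)" for k P
    unfolding avoiders_def by simp
  ultimately have "card (?X \<union> ?Y \<union> ?Z) = card ?X + card ?Y + card ?Z"
    by (simp add: card_Un_disjoint)
  also have "\<dots> = 2 * card (avoiders (Suc (Suc n)) forbidden) + card (avoiders (Suc n) forbidden)"
    using inj_hd_tl by (simp add: card_image)
  finally show ?thesis
    using avoiders_Suc_Suc_Suc_eq[of n] by (simp add: N_def)
qed

lemma card_avoiders_short: "n \<le> 2 \<Longrightarrow> card (avoiders n forbidden) = fact n"
proof -
  assume "n \<le> 2"
  have "\<not> contains_pattern w s" if "w \<in> permutations_of_set {1..n}" "s \<in> forbidden" for w s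
    using that \<open>n \<le> 2\<close> contains_pattern_length_le[of w s] length_finite_permutations_of_set[of w]
    by auto
  then have "avoiders n forbidden = permutations_of_set {1..n}"
    unfolding avoiders_def by blast
  then show ?thesis by simp
qed

theorem mainTheorem6:
  fixes n :: nat
  shows "card (avoiders n {[1,2,3], [2,1,4,3], [3,2,1,4]}) = pseq n"
proof (induction n rule: pseq.induct)
  case (4 n)
  then show ?case by (simp only: card_avoiders_Suc_Suc_Suc pseq.simps)
qed (use card_avoiders_short[of 0] card_avoiders_short[of "Suc 0"]
       card_avoiders_short[of "Suc (Suc 0)"] in simp_all)

end
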